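(* Let $\phi^c$ map a nonempty face $F$ of $V^c_O$ to $\phi^c(F)=\bigcup\{\mathrm{supp}(\lambda): \lambda\in\Upsilon_1,\ F\subseteq K_\lambda\}$. Then $\phi^c(F)$ is a coherent acyclic orientation of a cut subgraph of $G$, and $\phi^c$ is injective and order-preserving (if $F_1\subseteq F_2$ then $\phi^c(F_2)\subseteq\phi^c(F_1)$). The vertices of $V^c_O$ are in one-to-one correspondence with the acyclic orientations of $G$ (with loops deleted): each acyclic orientation $D$ defines a unique vertex $\nu^D$ of $V^c_O$, and every vertex is of this form. Moreover, each face $F$ is the convex hull of the vertices $\nu^D$ with $D$ ranging over the acyclic orientations of $G$ containing $\phi^c(F)$.
   Context: $G=(V,E)$ is a finite connected graph; each edge gives oriented edges $e,\bar e$. Real $1$-cochains are $x$ on oriented edges with $x_{\bar e}=-x_e$, $\langle x,y\rangle=\sum_{e\in E}x_ey_e$, $q(x)=\langle x,x\rangle$. For $f:V\to\mathbb R$, $d(f)(e)=f(\text{head}(e))-f(\text{tail}(e))$; $K=d(\mathbb R^V)$ and $L=d(\mathbb Z^V)$. $V^c_O=\{x\in K: q(x)\le q(x-\mu)\ \forall\mu\in L\}$. $\mathrm{supp}(x)=\{e: x_e>0\}$. $\chi_C$ is the characteristic function of $C$; if $G[C]$ has $k$ and $G[V\setminus C]$ has $r$ connected components, $\kappa(C,V\setminus C)=k+r-1$; $\Upsilon_1=\{d(\chi_C): \kappa(C,V\setminus C)=1\}$; $K_\lambda=\{x\in K: 2\langle x,\lambda\rangle=q(\lambda)\}$. A cut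 subgraph is the set of edges joining different parts of a partition $V_1,\dots,V_s$ of $V$; a coherent acyclic orientation of it orients, for some such partition, all edges from $V_i$ to $V_j$ when $i<j$. An orientation is acyclic if it contains no directed cycle. *)

theory Defs
  imports "HOL-Analysis.Analysis"
begin

text \<open>A finite (multi)graph with vertex set V and edge set E; every edge e has
  a fixed reference orientation from tle e to hde e (loops allowed).
  Oriented edges are pairs (e, b): (e, True) is e, (e, False) is its reverse.
  A real 1-cochain is a vector x :: real^'e, x$e being its value on (e, True);
  its value on (e, False) is -(x$e).  Cochains are taken to vanish off E.\<close>

definition ohd :: "('e \<Rightarrow> 'v) \<Rightarrow> ('e \<Rightarrow> 'v) \<Rightarrow> 'e \<times> bool \<Rightarrow> 'v" where
  "ohd hde tle oe = (if snd oe then hde (fst oe) else tle (fst oe))"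

definition otl :: "('e \<Rightarrow> 'v) \<Rightarrow> ('e \<Rightarrow> 'v) \<Rightarrow> 'e \<times> bool \<Rightarrow> 'v" where
  "otl hde tle oe = (if snd oe then tle (fst oe) else hde (fst oe))"

definition oval :: "real^'e \<Rightarrow> 'e \<times> bool \<Rightarrow> real" where
  "oval x oe = (if snd oe then x $ fst oe else - (x $ fst oe))"

definition oriented_edges :: "'e set \<Rightarrow> ('e \<times> bool) set" where
  "oriented_edges E = E \<times> UNIV"

definition is_graph :: "'v set \<Rightarrow> 'e set \<Rightarrow> ('e \<Rightarrow> 'v) \<Rightarrow> ('e \<Rightarrow> 'v) \<Rightarrow> bool" where
  "is_graph V E hde tle \<longleftrightarrow> finite V \<and> finite E \<and> (\<forall>e\<in>E. hde e \<in> V \<and> tle e \<in> V)"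

definition adj_in :: "'e set \<Rightarrow> ('e \<Rightarrow> 'v) \<Rightarrow> ('e \<Rightarrow> 'v) \<Rightarrow> 'v set \<Rightarrow> ('v \<times> 'v) set" where
  "adj_in E hde tle C = {(u, w). \<exists>e\<in>E. hde e \<in> C \<and> tle e \<in> C \<and>
                         ((u = tle e \<and> w = hde e) \<or> (u = hde e \<and> w = tle e))}"

definition num_components :: "'e set \<Rightarrow> ('e \<Rightarrow> 'v) \<Rightarrow> ('e \<Rightarrow> 'v) \<Rightarrow> 'v set \<Rightarrow> nat" where
  "num_components E hde tle C = card (C // ((adj_in E hde tle C)\<^sup>*))"

definition connected_graph :: "'v set \<Rightarrow> 'e set \<Rightarrow> ('e \<Rightarrow> 'v) \<Rightarrow> ('e \<Rightarrow> 'v) \<Rightarrow> bool" where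
  "connected_graph V E hde tle \<longleftrightarrow> num_components E hde tle V = 1"

definition kappa :: "'v set \<Rightarrow> 'e set \<Rightarrow> ('e \<Rightarrow> 'v) \<Rightarrow> ('e \<Rightarrow> 'v) \<Rightarrow> 'v set \<Rightarrow> int" where
  "kappa V E hde tle C = int (num_components E hde tle C) + int (num_components E hde tle (V - C)) - 1"

definition cobd :: "'e set \<Rightarrow> ('e \<Rightarrow> 'v) \<Rightarrow> ('e \<Rightarrow> 'v) \<Rightarrow> ('v \<Rightarrow> real) \<Rightarrow> real^'e" where
  "cobd E hde tle f = (\<chi> e. if e \<in> E then f (hde e) - f (tle e) else 0)"

definition inner_c :: "'e set \<Rightarrow> real^'e \<Rightarrow> real^'e \<Rightarrow> real" where
  "inner_c E x y = (\<Sum>e\<in>E. x $ e * y $ e)"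

definition qf :: "'e set \<Rightarrow> real^'e \<Rightarrow> real" where
  "qf E x = inner_c E x x"

definition Kspace :: "'v set \<Rightarrow> 'e set \<Rightarrow> ('e \<Rightarrow> 'v) \<Rightarrow> ('e \<Rightarrow> 'v) \<Rightarrow> (real^'e) set" where
  "Kspace V E hde tle = cobd E hde tle ` UNIV"

definition Llattice :: "'v set \<Rightarrow> 'e set \<Rightarrow> ('e \<Rightarrow> 'v) \<Rightarrow> ('e \<Rightarrow> 'v) \<Rightarrow> (real^'e) set" where
  "Llattice V E hde tle = cobd E hde tle ` {f. \<forall>v. f v \<in> \<int>}"

definition VcO :: "'v set \<Rightarrow> 'e set \<Rightarrow> ('e \<Rightarrow> 'v) \<Rightarrow> ('e \<Rightarrow> 'v) \<Rightarrow> (real^'e) set" where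
  "VcO V E hde tle = {x \<in> Kspace V E hde tle. \<forall>\<mu>\<in>Llattice V E hde tle. qf E x \<le> qf E (x - \<mu>)}"

definition supp_c :: "'e set \<Rightarrow> real^'e \<Rightarrow> ('e \<times> bool) set" where
  "supp_c E x = {oe \<in> oriented_edges E. oval x oe > 0}"

definition chi :: "'v set \<Rightarrow> 'v \<Rightarrow> real" where
  "chi C v = (if v \<in> C then 1 else 0)"

definition Upsilon1 :: "'v set \<Rightarrow> 'e set \<Rightarrow> ('e \<Rightarrow> 'v) \<Rightarrow> ('e \<Rightarrow> 'v) \<Rightarrow> (real^'e) set" where
  "Upsilon1 V E hde tle = {cobd E hde tle (chi C) | C. C \<subseteq> V \<and> kappa V E hde tle C = 1}"

definition Klam :: "'v set \<Rightarrow> 'e set \<Rightarrow> ('e \<Rightarrow> 'v) \<Rightarrow> ('e \<Rightarrow> 'v) \<Rightarrow> real^'e \<Rightarrow> (real^'e) set" where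
  "Klam V E hde tle lam = {x \<in> Kspace V E hde tle. 2 * inner_c E x lam = qf E lam}"

definition phi_c :: "'v set \<Rightarrow> 'e set \<Rightarrow> ('e \<Rightarrow> 'v) \<Rightarrow> ('e \<Rightarrow> 'v) \<Rightarrow> (real^'e) set \<Rightarrow> ('e \<times> bool) set" where
  "phi_c V E hde tle F =
     \<Union>{supp_c E lam | lam. lam \<in> Upsilon1 V E hde tle \<and> F \<subseteq> Klam V E hde tle lam}"

definition acyclic_oset :: "('e \<Rightarrow> 'v) \<Rightarrow> ('e \<Rightarrow> 'v) \<Rightarrow> ('e \<times> bool) set \<Rightarrow> bool" where
  "acyclic_oset hde tle D \<longleftrightarrow> acyclic {(otl hde tle oe, ohd hde tle oe) | oe. oe \<in> D}"

definition acyclic_orientations :: "'e set \<Rightarrow> ('e \<Rightarrow> 'v) \<Rightarrow> ('e \<Rightarrow> 'v) \<Rightarrow> ('e \<times> bool) set set" where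
  "acyclic_orientations E hde tle =
     {D. D \<subseteq> oriented_edges {e \<in> E. hde e \<noteq> tle e} \<and>
         (\<forall>e\<in>E. hde e \<noteq> tle e \<longrightarrow> ((e, True) \<in> D \<longleftrightarrow> (e, False) \<notin> D)) \<and>
         acyclic_oset hde tle D}"

text \<open>Coherent acyclic orientation of a cut subgraph: for an ordered partition
  V_1,...,V_s of V (encoded by the index map p : V \<rightarrow> nat, V_i = p^{-1}(i)), the set of
  all edges between different parts, each oriented from the part of smaller index
  to the part of larger index.\<close>
definition coherent_cut_orientation ::
  "'v set \<Rightarrow> 'e set \<Rightarrow> ('e \<Rightarrow> 'v) \<Rightarrow> ('e \<Rightarrow> 'v) \<Rightarrow> ('e \<times> bool) set \<Rightarrow> bool" where
  "coherent_cut_orientation V E hde tle Ori \<longleftrightarrow>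
     (\<exists>p :: 'v \<Rightarrow> nat. Ori = {oe \<in> oriented_edges E. p (otl hde tle oe) < p (ohd hde tle oe)})"

end

theory Submission
  imports Defs
begin

(* For a real potential h write tv h for the l1-norm of dh.  Decomposing h into
   nested indicator functions ("layer cake") shows that the cut inequalities
   2<x, d chi_C> <= tv (chi C) imply 2<x, dh> <= tv h for all h, and in particular all lattice
   inequalities.  Hence V^c_O is the polytope cut out of K by finitely many half-spaces, and
   every nonempty face is exposed by a functional of the form dh:  F = Face h.
   For an acyclic orientation D the projection nu D of the cochain which is 1/2 on D lies in
   V^c_O, and nu D lies in Face h exactly when supp(dh) is contained in D.  Every potential
   admits such a compatible D, so by Krein-Milman Face h is the convex hull of these nu D;
   in particular nu is a bijection onto the vertices.  Finally, in a connected graph each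
   oriented edge of supp(dh) lies in a bond whose coherent orientation is contained in
   supp(dh), and such bonds are exactly those whose facets contain Face h; this gives
   phi^c(Face h) = supp(dh), a coherent acyclic cut orientation. *)

lemma abs_le_square_int: fixes r :: real assumes "r \<in> \<int>" shows "\<bar>r\<bar> \<le> r\<^sup>2"
proof -
  obtain k where k: "r = of_int k" using assms Ints_cases by blast
  have "\<bar>k\<bar> \<le> k\<^sup>2"
  proof (cases "k = 0")
    case False
    then have "\<bar>k\<bar> * 1 \<le> \<bar>k\<bar> * \<bar>k\<bar>" by (intro mult_left_mono) auto
    then show ?thesis by (simp add: power2_eq_square abs_mult_self_eq)
  qed simp
  then have "real_of_int \<bar>k\<bar> \<le> real_of_int (k\<^sup>2)" by linarith
  then show ?thesis by (simp add: k)
qed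

locale finite_graph =
  fixes V :: "'v set" and E :: "'e::finite set" and hde tle :: "'e \<Rightarrow> 'v"
  assumes graph: "is_graph V E hde tle"
begin

abbreviation "d \<equiv> cobd E hde tle"
abbreviation "K \<equiv> Kspace V E hde tle"
abbreviation "VC \<equiv> VcO V E hde tle"
abbreviation "AO \<equiv> acyclic_orientations E hde tle"
abbreviation "ohead \<equiv> ohd hde tle"
abbreviation "otail \<equiv> otl hde tle"

definition tv :: "('v \<Rightarrow> real) \<Rightarrow> real" where
  "tv h = (\<Sum>e\<in>E. \<bar>d h $ e\<bar>)"

lemma finite_V: "finite V" and finite_E: "finite E"
  and ends_in_V: "e \<in> E \<Longrightarrow> hde e \<in> V \<and> tle e \<in> V"
  using graph by (auto simp: is_graph_def)

lemma oriented_ends_simps [simp]: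
  "ohead (e, True) = hde e" "ohead (e, False) = tle e"
  "otail (e, True) = tle e" "otail (e, False) = hde e"
  by (simp_all add: ohd_def otl_def)

lemma d_nth: "d f $ e = (if e \<in> E then f (hde e) - f (tle e) else 0)"
  by (simp add: cobd_def)

lemma d_add: "d (\<lambda>v. f v + g v) = d f + d g"
  by (simp add: cobd_def vec_eq_iff)

lemma d_scale: "d (\<lambda>v. c * f v) = c *\<^sub>R d f"
  by (simp add: cobd_def vec_eq_iff algebra_simps)

lemma K_eq: "K = range d"
  by (simp add: Kspace_def)

lemma subspace_K: "subspace K"
  unfolding subspace_def K_eq
proof (intro conjI ballI allI)
  have "d (\<lambda>v. 0) = 0" by (simp add: cobd_def vec_eq_iff)
  then show "0 \<in> range d" by (metis rangeI)
  fix x y assume "x \<in> range d" "y \<in> range d"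
  then obtain f g where "x = d f" "y = d g" by auto
  then show "x + y \<in> range d" by (simp add: d_add[symmetric])
next
  fix c x assume "x \<in> range d"
  then obtain f where "x = d f" by auto
  then show "c *\<^sub>R x \<in> range d" by (simp add: d_scale[symmetric])
qed

text \<open>The pairing used in the definitions agrees with the inner product on coboundaries,
  which vanish off E.\<close>
lemma inner_c_d: "inner_c E x (d f) = x \<bullet> d f"
proof -
  have "x \<bullet> d f = (\<Sum>e\<in>UNIV. x $ e * d f $ e)" by (simp add: inner_vec_def)
  also have "\<dots> = (\<Sum>e\<in>E. x $ e * d f $ e)"
    by (rule sum.mono_neutral_right) (auto simp: d_nth)
  finally show ?thesis by (simp add: inner_c_def)
qed

lemma qf_diff: "qf E (x - y) = qf E x - 2 * inner_c E x y + qf E y"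
proof -
  have "qf E (x - y) = (\<Sum>e\<in>E. (x$e * x$e + y$e * y$e) - 2 * (x$e * y$e))"
    unfolding qf_def inner_c_def by (rule sum.cong) (auto simp: algebra_simps)
  also have "\<dots> = (\<Sum>e\<in>E. x$e * x$e) + (\<Sum>e\<in>E. y$e * y$e) - 2 * (\<Sum>e\<in>E. x$e * y$e)"
    by (simp only: sum_subtractf sum.distrib sum_distrib_left)
  finally show ?thesis by (simp add: qf_def inner_c_def)
qed

lemma oval_d: "fst oe \<in> E \<Longrightarrow> oval (d f) oe = f (ohead oe) - f (otail oe)"
  by (cases oe) (auto simp: oval_def d_nth)

lemma supp_d_iff: "oe \<in> supp_c E (d f) \<longleftrightarrow> fst oe \<in> E \<and> f (otail oe) < f (ohead oe)"
  by (cases oe) (auto simp: supp_c_def oriented_edges_def oval_d)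

lemma VC_iff:
  "x \<in> VC \<longleftrightarrow> x \<in> K \<and> (\<forall>g. (\<forall>v. g v \<in> \<int>) \<longrightarrow> 2 * (x \<bullet> d g) \<le> qf E (d g))"
  unfolding VcO_def Llattice_def by (auto simp: qf_diff inner_c_d)

lemma VC_sub_K: "VC \<subseteq> K"
  by (auto simp: VcO_def)

text \<open>For integral potentials the quadratic form dominates the total variation, since
  |n| \<le> n^2 on the integers.\<close>
lemma tv_le_qf:
  assumes "\<forall>v. g v \<in> \<int>" shows "tv g \<le> qf E (d g)"
  unfolding tv_def qf_def inner_c_def
proof (rule sum_mono)
  fix e
  have "d g $ e \<in> \<int>" using assms by (simp add: d_nth)
  then show "\<bar>d g $ e\<bar> \<le> d g $ e * d g $ e" by (metis abs_le_square_int power2_eq_square)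
qed

text \<open>The coboundary of an indicator takes values in {-1,0,1}, so its quadratic form is
  its total variation, the size of the cut.\<close>
lemma qf_chi: "qf E (d (chi C)) = tv (chi C)"
  unfolding qf_def inner_c_def tv_def by (rule sum.cong) (auto simp: d_nth chi_def)

text \<open>Testing the lattice inequalities on indicators gives the cut inequalities.\<close>
lemma cut_ineq: "x \<in> VC \<Longrightarrow> 2 * (x \<bullet> d (chi C)) \<le> tv (chi C)"
  unfolding VC_iff qf_chi[symmetric] by (simp add: chi_def)

text \<open>Layer-cake step: a non-constant potential h is h' + c \<cdot> chi C, where C is the set
  above the lowest level and c > 0 the gap to the next level; h' takes fewer values and
  the total variation splits accordingly.\<close>
lemma peel_lowest_level:
  fixes h :: "'v \<Rightarrow> real"
  assumes nonconst: "\<not> card (h ` V) \<le> 1"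
  obtains C c h' where "C \<subseteq> V" "0 \<le> c" "card (h' ` V) < card (h ` V)"
    "d h = d h' + c *\<^sub>R d (chi C)" "tv h = tv h' + c * tv (chi C)"
proof -
  have fin: "finite (h ` V)" using finite_V by simp
  define a where "a = Min (h ` V)"
  define b where "b = Min (h ` V - {a})"
  have a_in: "a \<in> h ` V" unfolding a_def using fin nonconst by (intro Min_in) auto
  have "h ` V - {a} \<noteq> {}"
  proof
    assume "h ` V - {a} = {}"
    then have "card (h ` V) \<le> card {a}" by (intro card_mono) auto
    then show False using nonconst by simp
  qed
  then have b_in: "b \<in> h ` V - {a}" unfolding b_def using fin by (intro Min_in) auto
  have ge_a: "a \<le> h v" if "v \<in> V" for v unfolding a_def using fin that by simp
  have ge_b: "b \<le> h v" if "v \<in> V" "h v \<noteq> a" for v unfolding b_def using fin that by simp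
  have ab: "a < b" using b_in ge_a by force
  define C where "C = {v\<in>V. a < h v}"
  define h' where "h' v = h v - (b - a) * chi C v" for v
  have "h' ` V \<subseteq> (\<lambda>t. t - (b - a)) ` (h ` V - {a})"
  proof
    fix y assume "y \<in> h' ` V"
    then obtain v where v: "v \<in> V" "y = h' v" by auto
    show "y \<in> (\<lambda>t. t - (b - a)) ` (h ` V - {a})"
    proof (cases "v \<in> C")
      case True
      then show ?thesis using v by (intro image_eqI[of _ _ "h v"]) (auto simp: h'_def chi_def C_def)
    next
      case False
      then have "y = b - (b - a)" using v ge_a[of v] by (simp add: h'_def chi_def C_def)
      then show ?thesis using b_in by blast
    qed
  qed
  then have "card (h' ` V) \<le> card (h ` V - {a})"
    by (meson card_image_le card_mono fin finite_Diff finite_imageI order_trans)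
  also have "\<dots> < card (h ` V)" using fin a_in nonconst by (simp add: card_Diff_singleton)
  finally have fewer: "card (h' ` V) < card (h ` V)" .
  have split: "\<bar>h u - h w\<bar> = \<bar>h' u - h' w\<bar> + (b - a) * \<bar>chi C u - chi C w\<bar>"
    if "u \<in> V" "w \<in> V" for u w
    using that ge_a[of u] ge_a[of w] ge_b[of u] ge_b[of w] ab
    by (auto simp: h'_def chi_def C_def abs_if)
  have "d h = d h' + (b - a) *\<^sub>R d (chi C)"
    by (simp add: vec_eq_iff d_nth h'_def algebra_simps)
  moreover have "tv h = tv h' + (b - a) * tv (chi C)"
    unfolding tv_def sum_distrib_left sum.distrib[symmetric]
    by (rule sum.cong) (auto simp: d_nth split ends_in_V)
  ultimately show thesis using that[of C "b - a" h'] fewer ab by (auto simp: C_def)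
qed

text \<open>The cut inequalities imply the inequality 2<x, dh> \<le> tv h for every real potential h:
  decompose h into nested indicators.\<close>
lemma layer_cake:
  assumes cut: "\<And>C. C \<subseteq> V \<Longrightarrow> 2 * (x \<bullet> d (chi C)) \<le> tv (chi C)"
  shows "2 * (x \<bullet> d h) \<le> tv h"
proof (induction "card (h ` V)" arbitrary: h rule: less_induct)
  case less
  show ?case
  proof (cases "card (h ` V) \<le> 1")
    case True
    then have "h v = h w" if "v \<in> V" "w \<in> V" for v w
      using that finite_V by (metis card_le_Suc0_iff_eq finite_imageI image_eqI One_nat_def)
    then have "d h = 0" by (simp add: vec_eq_iff d_nth ends_in_V)
    then show ?thesis by (simp add: tv_def)
  next
    case False
    then obtain C c h' where C: "C \<subseteq> V" "0 \<le> c" "card (h' ` V) < card (h ` V)"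
      "d h = d h' + c *\<^sub>R d (chi C)" "tv h = tv h' + c * tv (chi C)"
      by (rule peel_lowest_level)
    have "c * (2 * (x \<bullet> d (chi C))) \<le> c * tv (chi C)"
      using cut[OF C(1)] C(2) by (rule mult_left_mono)
    then show ?thesis using less(1)[OF C(3)] C(4,5) by (simp add: inner_add_right algebra_simps)
  qed
qed

lemma VC_bound: "x \<in> VC \<Longrightarrow> 2 * (x \<bullet> d h) \<le> tv h"
  by (rule layer_cake) (rule cut_ineq)

text \<open>V^c_O is cut out of K by the finitely many cut inequalities; the lattice
  inequalities follow from them by the layer-cake lemma.\<close>
lemma VC_eq_cuts:
  "VC = K \<inter> \<Inter> ((\<lambda>C. {x. (2 *\<^sub>R d (chi C)) \<bullet> x \<le> tv (chi C)}) ` Pow V)"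
proof (intro equalityI subsetI)
  fix x assume x: "x \<in> VC"
  have "(2 *\<^sub>R d (chi C)) \<bullet> x \<le> tv (chi C)" for C
    using cut_ineq[OF x, of C] by (simp add: inner_commute)
  then show "x \<in> K \<inter> \<Inter> ((\<lambda>C. {x. (2 *\<^sub>R d (chi C)) \<bullet> x \<le> tv (chi C)}) ` Pow V)"
    using x VC_sub_K by blast
next
  fix x assume x: "x \<in> K \<inter> \<Inter> ((\<lambda>C. {x. (2 *\<^sub>R d (chi C)) \<bullet> x \<le> tv (chi C)}) ` Pow V)"
  have cut: "2 * (x \<bullet> d (chi C)) \<le> tv (chi C)" if "C \<subseteq> V" for C
    using x that by (simp add: inner_commute)
  have "2 * (x \<bullet> d g) \<le> qf E (d g)" if "\<forall>v. g v \<in> \<int>" for g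
    using layer_cake[OF cut, of g] tv_le_qf[OF that] by linarith
  then show "x \<in> VC" using x by (simp add: VC_iff)
qed

lemma polyhedron_VC: "polyhedron VC"
proof -
  have "polyhedron K" by (rule affine_imp_polyhedron[OF subspace_imp_affine[OF subspace_K]])
  moreover have "polyhedron (\<Inter> ((\<lambda>C. {x. (2 *\<^sub>R d (chi C)) \<bullet> x \<le> tv (chi C)}) ` Pow V))"
    using finite_V by (intro polyhedron_Inter) (auto simp only: polyhedron_halfspace_le)
  ultimately show ?thesis unfolding VC_eq_cuts by (rule polyhedron_Int)
qed

lemma convex_VC: "convex VC" and closed_VC: "closed VC"
  using polyhedron_VC polyhedron_imp_convex polyhedron_imp_closed by auto

lemma represent_in_K: "\<exists>y\<in>K. \<forall>x\<in>K. a \<bullet> x = y \<bullet> x"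
proof -
  obtain y z where y: "y \<in> span K" and z: "\<And>w. w \<in> span K \<Longrightarrow> orthogonal z w"
    and a: "a = y + z"
    using orthogonal_subspace_decomp_exists[of K a] by blast
  have sp: "span K = K" using subspace_K by simp
  have "a \<bullet> x = y \<bullet> x" if "x \<in> K" for x
    using z[of x] that sp by (simp add: a inner_add_left orthogonal_def)
  then show ?thesis using y sp by auto
qed

lemma represent_by_d: "\<exists>h. \<forall>x\<in>K. a \<bullet> x = d h \<bullet> x"
  using represent_in_K[of a] by (auto simp: K_eq)

text \<open>Each coordinate is bounded on V^c_O, since it is a functional dh on K and both
  dh and -dh are bounded by the layer-cake inequality.\<close>
lemma bounded_VC: "bounded VC"
proof -
  have "\<forall>i. \<exists>h. \<forall>x\<in>K. axis i 1 \<bullet> x = d h \<bullet> x" using represent_by_d by blast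
  then obtain H where H: "\<And>i x. x \<in> K \<Longrightarrow> axis i 1 \<bullet> x = d (H i) \<bullet> x" by metis
  have coord: "\<bar>x $ i\<bar> \<le> tv (H i)" if x: "x \<in> VC" for x i
  proof -
    have "x \<in> K" using x VC_sub_K by blast
    then have "x $ i = d (H i) \<bullet> x" using H[of x i] by (simp add: inner_axis')
    then have xi: "x $ i = x \<bullet> d (H i)" by (simp add: inner_commute)
    have neg: "d (\<lambda>v. (-1) * H i v) = - d (H i)" by (simp only: d_scale) simp
    then have "tv (\<lambda>v. (-1) * H i v) = tv (H i)" by (simp add: tv_def)
    then show ?thesis using VC_bound[OF x, of "H i"] VC_bound[OF x, of "\<lambda>v. (-1) * H i v"] xi neg
      by (simp add: abs_le_iff)
  qed
  have "norm x \<le> (\<Sum>i\<in>UNIV. tv (H i))" if "x \<in> VC" for x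
    using norm_le_l1_cart[of x] sum_mono[of UNIV "\<lambda>i. \<bar>x $ i\<bar>", OF coord[OF that]] by linarith
  then show ?thesis unfolding bounded_iff by blast
qed

lemma compact_VC: "compact VC"
  using bounded_VC closed_VC compact_eq_bounded_closed by blast

lemma supp_d_edge:
  assumes "e \<in> E"
  shows "(e, True) \<in> supp_c E (d h) \<longleftrightarrow> d h $ e > 0"
    and "(e, False) \<in> supp_c E (d h) \<longleftrightarrow> d h $ e < 0"
  using assms by (auto simp: supp_d_iff d_nth)

lemma AO_edge: "D \<in> AO \<Longrightarrow> oe \<in> D \<Longrightarrow> fst oe \<in> E \<and> hde (fst oe) \<noteq> tle (fst oe)"
  by (auto simp: acyclic_orientations_def oriented_edges_def)

lemma AO_choice:
  "D \<in> AO \<Longrightarrow> e \<in> E \<Longrightarrow> hde e \<noteq> tle e \<Longrightarrow> (e, True) \<in> D \<longleftrightarrow> (e, False) \<notin> D"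
  by (auto simp: acyclic_orientations_def)

text \<open>The cochain which is 1/2 on every edge oriented as in D, and its orthogonal
  projection nu D to K; for acyclic D the latter is the vertex nu^D of V^c_O.\<close>
definition half_orientation :: "('e \<times> bool) set \<Rightarrow> real^'e" where
  "half_orientation D =
     (\<chi> e. if (e, True) \<in> D then 1/2 else if (e, False) \<in> D then -1/2 else 0)"

definition nu :: "('e \<times> bool) set \<Rightarrow> real^'e" where
  "nu D = (SOME y. y \<in> K \<and> (\<forall>x\<in>K. half_orientation D \<bullet> x = y \<bullet> x))"

lemma nu_spec: "nu D \<in> K \<and> (\<forall>x\<in>K. half_orientation D \<bullet> x = nu D \<bullet> x)"
  unfolding nu_def by (rule someI_ex) (use represent_in_K in blast)

lemma nu_d: "nu D \<bullet> d f = half_orientation D \<bullet> d f"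
  using nu_spec[of D] by (simp add: K_eq)

lemma orientation_slack:
  assumes D: "D \<in> AO" and e: "e \<in> E"
  shows "2 * (half_orientation D $ e * d h $ e) \<le> \<bar>d h $ e\<bar> \<and>
    (2 * (half_orientation D $ e * d h $ e) = \<bar>d h $ e\<bar> \<longleftrightarrow>
       (\<forall>b. (e, b) \<in> supp_c E (d h) \<longrightarrow> (e, b) \<in> D))"
proof (cases "hde e = tle e")
  case True
  then have "(e, b) \<notin> D" for b using AO_edge[OF D, of "(e, b)"] by auto
  moreover have "d h $ e = 0" using True by (simp add: d_nth)
  ultimately show ?thesis by (simp add: half_orientation_def supp_d_edge[OF e] all_bool_eq)
next
  case False
  then consider "(e, True) \<in> D" "(e, False) \<notin> D" | "(e, True) \<notin> D" "(e, False) \<in> D"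
    using AO_choice[OF D e] by blast
  then show ?thesis
    by cases (auto simp: half_orientation_def supp_d_edge[OF e] all_bool_eq abs_if)
qed

lemma half_orientation_sum:
  "2 * (half_orientation D \<bullet> d h) = (\<Sum>e\<in>E. 2 * (half_orientation D $ e * d h $ e))"
  by (simp add: inner_c_d[symmetric] inner_c_def sum_distrib_left)

lemma half_orientation_le: "D \<in> AO \<Longrightarrow> 2 * (half_orientation D \<bullet> d h) \<le> tv h"
  unfolding half_orientation_sum tv_def by (rule sum_mono) (use orientation_slack in blast)

lemma half_orientation_eq_iff:
  assumes D: "D \<in> AO"
  shows "2 * (half_orientation D \<bullet> d h) = tv h \<longleftrightarrow> supp_c E (d h) \<subseteq> D"
proof -
  let ?slack = "\<lambda>e. \<bar>d h $ e\<bar> - 2 * (half_orientation D $ e * d h $ e)"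
  have "2 * (half_orientation D \<bullet> d h) = tv h \<longleftrightarrow> (\<Sum>e\<in>E. ?slack e) = 0"
    by (simp add: half_orientation_sum tv_def sum_subtractf) linarith
  also have "\<dots> \<longleftrightarrow> (\<forall>e\<in>E. ?slack e = 0)"
    using orientation_slack[OF D] finite_E by (intro sum_nonneg_eq_0_iff) auto
  also have "\<dots> \<longleftrightarrow> (\<forall>e\<in>E. \<forall>b. (e, b) \<in> supp_c E (d h) \<longrightarrow> (e, b) \<in> D)"
    using orientation_slack[OF D, of _ h] by (metis eq_iff_diff_eq_0)
  also have "\<dots> \<longleftrightarrow> supp_c E (d h) \<subseteq> D"
    by (auto simp: supp_d_iff)
  finally show ?thesis .
qed

text \<open>Combined with tv \<le> qf on integral potentials, the vertices nu D lie in V^c_O.\<close>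
lemma nu_in_VC:
  assumes "D \<in> AO" shows "nu D \<in> VC"
proof -
  have "2 * (nu D \<bullet> d g) \<le> qf E (d g)" if "\<forall>v. g v \<in> \<int>" for g
    using half_orientation_le[OF assms, of g] tv_le_qf[OF that] by (simp add: nu_d)
  then show ?thesis using nu_spec by (simp add: VC_iff)
qed

definition Face :: "('v \<Rightarrow> real) \<Rightarrow> (real^'e) set" where
  "Face h = VC \<inter> {x. d h \<bullet> x = tv h / 2}"

lemma VC_le: "x \<in> VC \<Longrightarrow> d h \<bullet> x \<le> tv h / 2"
  using VC_bound[of x h] by (simp add: inner_commute)

lemma Face_face: "Face h face_of VC"
  unfolding Face_def by (rule face_of_Int_supporting_hyperplane_le[OF convex_VC VC_le])

lemma Face_compact: "compact (Face h)"
  unfolding Face_def by (rule compact_Int_closed[OF compact_VC closed_hyperplane])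

lemma nu_in_Face_iff: "D \<in> AO \<Longrightarrow> nu D \<in> Face h \<longleftrightarrow> supp_c E (d h) \<subseteq> D"
  using nu_in_VC[of D] nu_d[of D h] half_orientation_eq_iff[of D h]
  by (auto simp: Face_def inner_commute)

text \<open>Orienting every non-loop edge upwards for the lexicographic order of (h, r), where r
  ranks the vertices injectively, gives an acyclic orientation containing supp(dh).\<close>
definition lex_orientation :: "('v \<Rightarrow> real) \<Rightarrow> ('v \<Rightarrow> nat) \<Rightarrow> ('e \<times> bool) set" where
  "lex_orientation h r = {oe \<in> oriented_edges {e\<in>E. hde e \<noteq> tle e}.
     h (otail oe) < h (ohead oe) \<or> h (otail oe) = h (ohead oe) \<and> r (otail oe) < r (ohead oe)}"

lemma lex_orientation_AO:
  assumes r: "inj_on r V"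
  shows "lex_orientation h r \<in> AO" and "supp_c E (d h) \<subseteq> lex_orientation h r"
proof -
  define ord where "ord = {(u, w). h u < h w \<or> h u = h w \<and> r u < r w}"
  have "trans ord" unfolding ord_def by (rule transI) auto
  then have "acyclic ord" unfolding acyclic_def by (simp add: ord_def)
  then have acyc: "acyclic_oset hde tle (lex_orientation h r)"
    unfolding acyclic_oset_def
    by (rule acyclic_subset) (auto simp: lex_orientation_def ord_def)
  have "r (hde e) < r (tle e) \<or> r (tle e) < r (hde e)" if "e \<in> E" "hde e \<noteq> tle e" for e
    using r ends_in_V[OF that(1)] that(2) by (metis inj_on_def linorder_neqE_nat)
  then show "lex_orientation h r \<in> AO"
    using acyc by (auto simp: acyclic_orientations_def lex_orientation_def oriented_edges_def)
  show "supp_c E (d h) \<subseteq> lex_orientation h r"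
  proof
    fix oe assume "oe \<in> supp_c E (d h)"
    then have "fst oe \<in> E" "h (otail oe) < h (ohead oe)" by (auto simp: supp_d_iff)
    moreover from this have "hde (fst oe) \<noteq> tle (fst oe)"
      by (cases oe) (auto split: if_splits simp: ohd_def otl_def)
    ultimately show "oe \<in> lex_orientation h r"
      by (cases oe) (auto simp: lex_orientation_def oriented_edges_def)
  qed
qed

text \<open>Every potential admits a compatible acyclic orientation, which may moreover be chosen
  to contain a prescribed non-loop edge along which h does not decrease (rank its tail
  first).\<close>
lemma compatible_orientation_through:
  assumes "fst oe0 \<in> E" "hde (fst oe0) \<noteq> tle (fst oe0)" "h (otail oe0) \<le> h (ohead oe0)"
  shows "\<exists>D\<in>AO. supp_c E (d h) \<subseteq> D \<and> oe0 \<in> D"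
proof -
  obtain r0 :: "'v \<Rightarrow> nat" where r0: "inj_on r0 V"
    using finite_imp_inj_to_nat_seg[OF finite_V] by blast
  define r where "r v = (if v = otail oe0 then 0 else Suc (r0 v))" for v
  have r: "inj_on r V" using r0 by (auto simp: inj_on_def r_def split: if_splits)
  have "ohead oe0 \<noteq> otail oe0" using assms(2) by (cases oe0) (auto simp: ohd_def otl_def)
  then have "oe0 \<in> lex_orientation h r"
    using assms by (cases oe0) (auto simp: lex_orientation_def oriented_edges_def r_def)
  then show ?thesis using lex_orientation_AO[OF r] by blast
qed

lemma compatible_orientation: "\<exists>D\<in>AO. supp_c E (d h) \<subseteq> D"
proof -
  obtain r :: "'v \<Rightarrow> nat" where "inj_on r V"
    using finite_imp_inj_to_nat_seg[OF finite_V] by blast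
  then show ?thesis using lex_orientation_AO by blast
qed

lemma AO_antichain:
  assumes D: "D \<in> AO" and D': "D' \<in> AO" and sub: "D \<subseteq> D'"
  shows "D = D'"
proof -
  have "oe \<in> D" if oe: "oe \<in> D'" for oe
  proof (cases oe)
    case (Pair e b)
    have e: "e \<in> E" "hde e \<noteq> tle e" using AO_edge[OF D' oe] Pair by auto
    show ?thesis
      using AO_choice[OF D e] AO_choice[OF D' e] sub oe Pair by (cases b) auto
  qed
  then show ?thesis using sub by blast
qed

text \<open>Conversely, every acyclic orientation is the support of dh, where h counts the
  vertices from which a directed path leads to the given vertex.\<close>
lemma AO_is_supp:
  assumes D: "D \<in> AO"
  shows "\<exists>h. supp_c E (d h) = D"
proof -
  define R where "R = {(otail oe, ohead oe) |oe. oe \<in> D}"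
  have acyc: "acyclic R" using D by (simp add: acyclic_orientations_def acyclic_oset_def R_def)
  define h where "h v = real (card {w\<in>V. (w, v) \<in> R\<^sup>+})" for v
  have up: "h (otail oe) < h (ohead oe)" if oe: "oe \<in> D" for oe
  proof -
    have R: "(otail oe, ohead oe) \<in> R" unfolding R_def using oe by blast
    have "otail oe \<in> V" using AO_edge[OF D oe] ends_in_V by (auto simp: otl_def)
    then have "{w\<in>V. (w, otail oe) \<in> R\<^sup>+} \<subset> {w\<in>V. (w, ohead oe) \<in> R\<^sup>+}"
      using R acyc by (auto simp: acyclic_def intro: trancl_into_trancl)
    then show ?thesis unfolding h_def by (simp add: psubset_card_mono finite_V)
  qed
  have "supp_c E (d h) = D"
  proof (intro equalityI subsetI)
    fix oe assume oe: "oe \<in> supp_c E (d h)"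
    obtain e b where eb: "oe = (e, b)" by (cases oe)
    have "e \<in> E" "h (otail oe) < h (ohead oe)" using oe eb by (auto simp: supp_d_iff)
    moreover from this have "hde e \<noteq> tle e" using eb by (cases b) auto
    ultimately show "oe \<in> D"
      using AO_choice[OF D, of e] up[of "(e, \<not> b)"] eb by (cases b) auto
  next
    fix oe assume "oe \<in> D"
    then show "oe \<in> supp_c E (d h)" using AO_edge[OF D] up by (auto simp: supp_d_iff)
  qed
  then show ?thesis by blast
qed

text \<open>Every nonempty face is exposed (V^c_O is a polyhedron), the exposing functional may be
  taken to be some dh, and the supporting level is then forced to be tv h / 2 because
  Face h contains a vertex nu D.\<close>
lemma face_is_Face:
  assumes F: "F face_of VC" and ne: "F \<noteq> {}"
  shows "\<exists>h. F = Face h"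
proof -
  have "F exposed_face_of VC" using F exposed_face_of_polyhedron[OF polyhedron_VC] by blast
  then obtain a b where ab: "VC \<subseteq> {x. a \<bullet> x \<le> b}" and Fab: "F = VC \<inter> {x. a \<bullet> x = b}"
    unfolding exposed_face_of_def by blast
  obtain h where h: "\<And>x. x \<in> K \<Longrightarrow> a \<bullet> x = d h \<bullet> x" using represent_by_d by blast
  then have hVC: "\<And>x. x \<in> VC \<Longrightarrow> a \<bullet> x = d h \<bullet> x" using VC_sub_K by blast
  obtain x0 where "x0 \<in> F" using ne by blast
  then have "b \<le> tv h / 2" using Fab hVC VC_le by force
  moreover obtain D where "D \<in> AO" "supp_c E (d h) \<subseteq> D" using compatible_orientation by blast
  then have "nu D \<in> Face h" by (simp add: nu_in_Face_iff)
  then have "tv h / 2 \<le> b" using ab hVC by (force simp: Face_def)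
  ultimately have "F = Face h" using Fab hVC by (auto simp: Face_def)
  then show ?thesis by blast
qed

text \<open>Every vertex of V^c_O is some nu D: the singleton face is some Face h, which
  contains nu D for any orientation D compatible with h.\<close>
lemma extreme_point_is_nu:
  assumes "x extreme_point_of VC"
  shows "\<exists>D\<in>AO. x = nu D"
proof -
  have "{x} face_of VC" using assms by (simp add: face_of_singleton)
  then obtain h where h: "{x} = Face h" using face_is_Face by blast
  obtain D where "D \<in> AO" "supp_c E (d h) \<subseteq> D" using compatible_orientation by blast
  then have "nu D \<in> Face h" by (simp add: nu_in_Face_iff)
  then show ?thesis using h \<open>D \<in> AO\<close> by auto
qed

text \<open>By Krein-Milman each face is the convex hull of its extreme points, which are the
  vertices nu D lying on it.\<close>
lemma Face_hull: "Face h = convex hull (nu ` {D \<in> AO. supp_c E (d h) \<subseteq> D})"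
proof
  show "convex hull (nu ` {D \<in> AO. supp_c E (d h) \<subseteq> D}) \<subseteq> Face h"
    using Face_face face_of_imp_convex by (intro hull_minimal) (auto simp: nu_in_Face_iff)
next
  have "Face h = convex hull {x. x extreme_point_of (Face h)}"
    using Face_face face_of_imp_convex by (intro Krein_Milman_Minkowski Face_compact) blast
  also have "\<dots> \<subseteq> convex hull (nu ` {D \<in> AO. supp_c E (d h) \<subseteq> D})"
  proof (intro hull_mono subsetI)
    fix x assume "x \<in> {x. x extreme_point_of (Face h)}"
    then have x: "x extreme_point_of VC" "x \<in> Face h"
      using extreme_point_of_face[OF Face_face] by (auto simp: extreme_point_of_def)
    then obtain D where "D \<in> AO" "x = nu D" using extreme_point_is_nu by blast
    then show "x \<in> nu ` {D \<in> AO. supp_c E (d h) \<subseteq> D}" using x(2) nu_in_Face_iff by blast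
  qed
  finally show "Face h \<subseteq> convex hull (nu ` {D \<in> AO. supp_c E (d h) \<subseteq> D})" .
qed

text \<open>If D = supp(dh) is acyclic, then D is the only orientation compatible with h, so
  Face h is the single vertex nu D; hence nu is a bijection onto the vertices.\<close>
lemma Face_of_AO:
  assumes D: "D \<in> AO" and h: "supp_c E (d h) = D"
  shows "Face h = {nu D}"
proof -
  have "{D' \<in> AO. supp_c E (d h) \<subseteq> D'} = {D}" using AO_antichain[OF D] D h by auto
  then show ?thesis using Face_hull[of h] by simp
qed

lemma nu_bij: "bij_betw nu AO {x. x extreme_point_of VC}"
proof (rule bij_betw_imageI)
  show "inj_on nu AO"
  proof (rule inj_onI)
    fix D1 D2 assume D: "D1 \<in> AO" "D2 \<in> AO" and eq: "nu D1 = nu D2"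
    obtain h where h: "supp_c E (d h) = D1" using AO_is_supp[OF D(1)] by blast
    have "nu D2 \<in> Face h" using Face_of_AO[OF D(1) h] eq by simp
    then have "D1 \<subseteq> D2" using nu_in_Face_iff[OF D(2)] h by blast
    then show "D1 = D2" by (rule AO_antichain[OF D])
  qed
  have "nu D extreme_point_of VC" if D: "D \<in> AO" for D
  proof -
    obtain h where "supp_c E (d h) = D" using AO_is_supp[OF D] by blast
    then show ?thesis using Face_of_AO[OF D] Face_face[of h] by (simp add: face_of_singleton)
  qed
  then show "nu ` AO = {x. x extreme_point_of VC}" using extreme_point_is_nu by blast
qed

text \<open>The support of any coboundary is a coherent acyclic orientation of a cut: order the
  parts by the value of h (ranked by the number of smaller values).\<close>
lemma coherent_supp: "coherent_cut_orientation V E hde tle (supp_c E (d h))"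
proof -
  define p where "p v = card {t\<in>h ` V. t < h v}" for v
  have rank: "p u < p w \<longleftrightarrow> h u < h w" if "u \<in> V" "w \<in> V" for u w
  proof
    assume "h u < h w"
    then have "{t\<in>h ` V. t < h u} \<subset> {t\<in>h ` V. t < h w}" using that by auto
    then show "p u < p w" unfolding p_def by (simp add: psubset_card_mono finite_V)
  next
    assume lt: "p u < p w"
    show "h u < h w"
    proof (rule ccontr)
      assume "\<not> h u < h w"
      then have "{t\<in>h ` V. t < h w} \<subseteq> {t\<in>h ` V. t < h u}" by auto
      then have "p w \<le> p u" unfolding p_def by (simp add: card_mono finite_V)
      then show False using lt by simp
    qed
  qed
  have "oe \<in> supp_c E (d h) \<longleftrightarrow> oe \<in> oriented_edges E \<and> p (otail oe) < p (ohead oe)" for oe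
  proof (cases "fst oe \<in> E")
    case True
    then have "otail oe \<in> V" "ohead oe \<in> V" using ends_in_V by (auto simp: ohd_def otl_def)
    then show ?thesis using True rank by (cases oe) (auto simp: supp_d_iff oriented_edges_def)
  qed (auto simp: supp_d_iff oriented_edges_def)
  then have "supp_c E (d h) = {oe \<in> oriented_edges E. p (otail oe) < p (ohead oe)}" by blast
  then show ?thesis unfolding coherent_cut_orientation_def by blast
qed

abbreviation "adj \<equiv> adj_in E hde tle"

definition component :: "'v set \<Rightarrow> 'v \<Rightarrow> 'v set" where
  "component S s = {v\<in>S. (s, v) \<in> (adj S)\<^sup>*}"

lemma adj_in_set: "(u, w) \<in> adj S \<Longrightarrow> u \<in> S \<and> w \<in> S"
  by (auto simp: adj_in_def)

lemma adj_sym: "(u, w) \<in> adj S \<Longrightarrow> (w, u) \<in> adj S"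
  unfolding adj_in_def by blast

lemma adj_restrict: "(u, w) \<in> adj S \<Longrightarrow> u \<in> T \<Longrightarrow> w \<in> T \<Longrightarrow> (u, w) \<in> adj T"
  unfolding adj_in_def by blast

lemma edge_adj: "fst oe \<in> E \<Longrightarrow> (ohead oe, otail oe) \<in> adj V"
  using ends_in_V by (cases oe) (auto simp: adj_in_def ohd_def otl_def)

lemma reach_sym: "(u, w) \<in> (adj S)\<^sup>* \<Longrightarrow> (w, u) \<in> (adj S)\<^sup>*"
proof (induction rule: rtrancl_induct)
  case (step y z)
  show ?case by (rule converse_rtrancl_into_rtrancl[OF adj_sym[OF step(2)] step(3)])
qed simp

lemma reach_in: "(u, w) \<in> (adj S)\<^sup>* \<Longrightarrow> u \<in> S \<Longrightarrow> w \<in> S"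
  by (induction rule: rtrancl_induct) (auto dest: adj_in_set)

lemma reach_mono:
  assumes "S \<subseteq> T" and "(u, w) \<in> (adj S)\<^sup>*" shows "(u, w) \<in> (adj T)\<^sup>*"
proof -
  have "adj S \<subseteq> adj T" using assms(1) by (auto simp: adj_in_def)
  then show ?thesis using assms(2) rtrancl_mono by blast
qed

lemma component_subset: "component S s \<subseteq> S"
  by (auto simp: component_def)

lemma component_closed:
  "p \<in> component S s \<Longrightarrow> q \<in> S \<Longrightarrow> (p, q) \<in> adj T \<Longrightarrow> q \<in> component S s"
  unfolding component_def by (auto intro: rtrancl_into_rtrancl adj_restrict)

lemma component_reach:
  assumes s: "s \<in> S" and v: "v \<in> component S s"
  shows "(s, v) \<in> (adj (component S s))\<^sup>*"
proof -
  have "(s, v) \<in> (adj S)\<^sup>*" using v by (simp add: component_def)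
  then show ?thesis
  proof (induction rule: rtrancl_induct)
    case (step y z)
    have "y \<in> component S s" using step(1) reach_in[OF step(1) s] by (simp add: component_def)
    moreover have "z \<in> component S s"
      using adj_in_set[OF step(2)] rtrancl_into_rtrancl[OF step(1,2)] by (simp add: component_def)
    ultimately show ?case using step(2,3) by (blast intro: rtrancl_into_rtrancl adj_restrict)
  qed simp
qed

lemma connected_from:
  assumes s: "s \<in> S" and reach: "\<And>v. v \<in> S \<Longrightarrow> (s, v) \<in> (adj S)\<^sup>*"
  shows "num_components E hde tle S = 1"
proof -
  have "(adj S)\<^sup>* `` {x} = S" if x: "x \<in> S" for x
    using reach_in[OF _ x] reach_sym[OF reach[OF x]] reach
    by (auto intro: rtrancl_trans)
  then have "S // (adj S)\<^sup>* = {S}" using s by (auto simp: quotient_def)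
  then show ?thesis by (simp add: num_components_def)
qed

lemma component_connected:
  assumes "s \<in> S" shows "num_components E hde tle (component S s) = 1"
  using assms component_reach[OF assms] by (intro connected_from) (auto simp: component_def)

lemma component_boundary:
  fixes X :: "'v set" and t :: 'v
  defines "A \<equiv> component (V - X) t"
  assumes p: "p \<in> component (V - A) s" and q: "q \<in> V" "q \<notin> component (V - A) s"
    and pq: "(p, q) \<in> adj V"
  shows "p \<in> X \<and> q \<in> A"
proof -
  have qA: "q \<in> A" using component_closed[OF p _ pq] q by blast
  have "p \<in> V - A" using p component_subset by blast
  moreover have "p \<notin> V - X \<or> p \<in> A"
    using component_closed[OF qA[unfolded A_def] _ adj_sym[OF pq]] adj_in_set[OF pq]
    unfolding A_def by blast
  ultimately show ?thesis using qA by blast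
qed

text \<open>If the coherent orientation of the cut of C lies in supp(dh), lowering h on C by a small
  \<epsilon> > 0 shortens every cut edge by \<epsilon>, so the total variation drops by \<epsilon> \<cdot> tv(chi C).\<close>
lemma shrink_along_cut:
  assumes sub: "supp_c E (d (chi C)) \<subseteq> supp_c E (d h)"
  obtains \<epsilon> where "0 < \<epsilon>" "tv (\<lambda>v. h v - \<epsilon> * chi C v) = tv h - \<epsilon> * tv (chi C)"
proof -
  define M where "M = insert 1 ((\<lambda>e. \<bar>d h $ e\<bar>) ` {e\<in>E. d h $ e \<noteq> 0})"
  define \<epsilon> where "\<epsilon> = Min M"
  have fin: "finite M" using finite_E by (simp add: M_def)
  have pos: "0 < \<epsilon>" unfolding \<epsilon>_def using fin by (auto simp: M_def Min_gr_iff)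
  have small: "\<epsilon> \<le> \<bar>d h $ e\<bar>" if "e \<in> E" "d h $ e \<noteq> 0" for e
    unfolding \<epsilon>_def using fin that by (intro Min_le) (auto simp: M_def)
  have edge: "\<bar>d (\<lambda>v. h v - \<epsilon> * chi C v) $ e\<bar> = \<bar>d h $ e\<bar> - \<epsilon> * \<bar>d (chi C) $ e\<bar>"
    if e: "e \<in> E" for e
  proof -
    have sign: "d (chi C) $ e > 0 \<Longrightarrow> d h $ e > 0" "d (chi C) $ e < 0 \<Longrightarrow> d h $ e < 0"
      using sub supp_d_edge[OF e] by blast+
    have "d (\<lambda>v. h v - \<epsilon> * chi C v) $ e = d h $ e - \<epsilon> * d (chi C) $ e"
      using e by (simp add: d_nth algebra_simps)
    moreover have "d (chi C) $ e \<in> {-1, 0, 1}" using e by (simp add: d_nth chi_def)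
    ultimately show ?thesis using sign small[OF e] by auto
  qed
  have "tv (\<lambda>v. h v - \<epsilon> * chi C v) = tv h - \<epsilon> * tv (chi C)"
    unfolding tv_def sum_distrib_left sum_subtractf[symmetric] by (rule sum.cong) (simp_all add: edge)
  then show thesis using that pos by blast
qed

lemma Face_sub_Klam:
  assumes sub: "supp_c E (d (chi C)) \<subseteq> supp_c E (d h)"
  shows "Face h \<subseteq> Klam V E hde tle (d (chi C))"
proof
  fix x assume x: "x \<in> Face h"
  obtain \<epsilon> where \<epsilon>: "0 < \<epsilon>" "tv (\<lambda>v. h v - \<epsilon> * chi C v) = tv h - \<epsilon> * tv (chi C)"
    using shrink_along_cut[OF sub] by blast
  have "d (\<lambda>v. h v - \<epsilon> * chi C v) = d h - \<epsilon> *\<^sub>R d (chi C)"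
    by (simp add: vec_eq_iff d_nth algebra_simps)
  then have "d h \<bullet> x - \<epsilon> * (d (chi C) \<bullet> x) \<le> (tv h - \<epsilon> * tv (chi C)) / 2"
    using VC_le[of x "\<lambda>v. h v - \<epsilon> * chi C v"] x \<epsilon>(2) by (simp add: Face_def inner_diff_left)
  then have "\<epsilon> * tv (chi C) \<le> \<epsilon> * (2 * (x \<bullet> d (chi C)))"
    using x by (simp add: Face_def inner_commute algebra_simps)
  then have "tv (chi C) \<le> 2 * (x \<bullet> d (chi C))" using \<epsilon>(1) by simp
  moreover have "2 * (x \<bullet> d (chi C)) \<le> tv (chi C)" using cut_ineq x by (simp add: Face_def)
  ultimately show "x \<in> Klam V E hde tle (d (chi C))"
    using x VC_sub_K by (auto simp: Klam_def inner_c_d qf_chi Face_def)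
qed

lemma reverse_ends: "ohead (fst oe, \<not> snd oe) = otail oe" "otail (fst oe, \<not> snd oe) = ohead oe"
  by (cases oe, simp add: ohd_def otl_def)+

text \<open>Conversely, if Face h lies on K_lambda for lambda = d chi_C, then the cut of C is
  oriented inside supp(dh): otherwise some vertex nu D of Face h, with D containing the
  reverse of a cut edge, would violate the equality.\<close>
lemma Klam_supp:
  assumes F: "Face h \<subseteq> Klam V E hde tle (d (chi C))"
  shows "supp_c E (d (chi C)) \<subseteq> supp_c E (d h)"
proof
  fix oe assume oe: "oe \<in> supp_c E (d (chi C))"
  then have e: "fst oe \<in> E" and ends: "ohead oe \<in> C" "otail oe \<notin> C"
    by (auto simp: supp_d_iff chi_def split: if_splits)
  let ?rev = "(fst oe, \<not> snd oe)"
  have nonloop: "hde (fst oe) \<noteq> tle (fst oe)"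
    using ends by (auto simp: ohd_def otl_def split: if_splits)
  show "oe \<in> supp_c E (d h)"
  proof (rule ccontr)
    assume "oe \<notin> supp_c E (d h)"
    then have "h (otail ?rev) \<le> h (ohead ?rev)" using e by (simp add: supp_d_iff reverse_ends)
    then obtain D where D: "D \<in> AO" "supp_c E (d h) \<subseteq> D" "?rev \<in> D"
      using compatible_orientation_through[of ?rev h] e nonloop by auto
    then have "nu D \<in> Klam V E hde tle (d (chi C))" using F nu_in_Face_iff by blast
    then have "2 * (half_orientation D \<bullet> d (chi C)) = tv (chi C)"
      by (simp add: Klam_def inner_c_d qf_chi nu_d)
    then have "oe \<in> D" using half_orientation_eq_iff[OF D(1)] oe by blast
    moreover obtain e b where "oe = (e, b)" by (cases oe)
    ultimately show False using D(3) AO_choice[OF D(1) e nonloop] by (cases b) auto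
  qed
qed

end

locale connected_finite_graph = finite_graph V E hde tle
  for V :: "'v set" and E :: "'e::finite set" and hde tle :: "'e \<Rightarrow> 'v" +
  assumes conn: "connected_graph V E hde tle"
begin

lemma reach_all: "x \<in> V \<Longrightarrow> y \<in> V \<Longrightarrow> (x, y) \<in> (adj V)\<^sup>*"
proof -
  assume x: "x \<in> V" and y: "y \<in> V"
  obtain X where X: "V // (adj V)\<^sup>* = {X}"
    using conn by (auto simp: connected_graph_def num_components_def card_1_singleton_iff)
  then have "(adj V)\<^sup>* `` {x} = (adj V)\<^sup>* `` {y}"
    using quotientI[OF x, of "(adj V)\<^sup>*"] quotientI[OF y, of "(adj V)\<^sup>*"] by simp
  then show ?thesis by (metis Image_singleton_iff rtrancl.rtrancl_refl)
qed

text \<open>In a connected graph, deleting a component C of G[V - A] from V leaves a connected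
  graph when A is connected: each remaining vertex is reached from A avoiding C.\<close>
lemma cocomponent_connected:
  fixes A :: "'v set" and s t :: 'v
  assumes A: "A \<subseteq> V" "t \<in> A" "\<And>w. w \<in> A \<Longrightarrow> (t, w) \<in> (adj A)\<^sup>*"
  defines "C \<equiv> component (V - A) s"
  shows "num_components E hde tle (V - C) = 1"
proof (rule connected_from)
  have CA: "A \<subseteq> V - C" using A(1) component_subset[of "V - A" s] by (auto simp: C_def)
  then show "t \<in> V - C" using A(2) by blast
  have "w \<in> C \<or> (t, w) \<in> (adj (V - C))\<^sup>*" if "(t, w) \<in> (adj V)\<^sup>*" for w
    using that
  proof (induction rule: rtrancl_induct)
    case (step w x)
    have wx: "w \<in> V" "x \<in> V" using adj_in_set[OF step(2)] by auto
    consider "x \<in> C" | "w \<in> C" "x \<notin> C" | "w \<notin> C" "x \<notin> C" by blast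
    then show ?case
    proof cases
      case 2
      then have "x \<in> A" using component_closed[OF 2(1)[unfolded C_def] _ step(2)] wx
        by (auto simp: C_def)
      then show ?thesis using reach_mono[OF CA A(3)] by blast
    next
      case 3
      then show ?thesis using step wx by (auto intro: rtrancl_into_rtrancl adj_restrict)
    qed simp
  qed simp
  then show "(t, w) \<in> (adj (V - C))\<^sup>*" if "w \<in> V - C" for w
    using that reach_all A by blast
qed

text \<open>Every oriented edge of supp(dh) lies in a bond (a cut with both sides connected)
  whose coherent orientation is contained in supp(dh): the bond separates the component of
  the edge's head inside the complement of the component of its tail below level h(head).\<close>
lemma bond_in_supp:
  assumes oe: "oe \<in> supp_c E (d h)"
  obtains C where "C \<subseteq> V" "kappa V E hde tle C = 1" "oe \<in> supp_c E (d (chi C))"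
    "supp_c E (d (chi C)) \<subseteq> supp_c E (d h)"
proof -
  define s t where "s = ohead oe" and "t = otail oe"
  have "fst oe \<in> E" "h t < h s" using oe by (auto simp: supp_d_iff s_def t_def)
  then have st: "s \<in> V" "t \<in> V" "h t < h s"
    using ends_in_V by (auto simp: s_def t_def ohd_def otl_def)
  define X where "X = {v\<in>V. h s \<le> h v}"
  define A where "A = component (V - X) t"
  define C where "C = component (V - A) s"
  have A: "A \<subseteq> V" "t \<in> A" "\<And>w. w \<in> A \<Longrightarrow> (t, w) \<in> (adj A)\<^sup>*"
    using st component_reach[of t "V - X"] by (auto simp: A_def component_def X_def)
  have sC: "s \<in> C" and CV: "C \<subseteq> V" and tC: "t \<notin> C"
    using st A component_subset[of "V - A" s] component_subset[of "V - X" t]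
    by (auto simp: C_def A_def component_def X_def)
  have "kappa V E hde tle C = 1"
    using component_connected[of s "V - A"] cocomponent_connected[OF A, of s] sC
      component_subset[of "V - A" s] by (auto simp: kappa_def C_def)
  moreover have "oe \<in> supp_c E (d (chi C))"
    using oe sC tC by (auto simp: supp_d_iff chi_def s_def t_def)
  moreover have "supp_c E (d (chi C)) \<subseteq> supp_c E (d h)"
  proof
    fix oe' assume "oe' \<in> supp_c E (d (chi C))"
    then have oe': "fst oe' \<in> E" "ohead oe' \<in> C" "otail oe' \<notin> C"
      by (auto simp: supp_d_iff chi_def split: if_splits)
    then have "ohead oe' \<in> X \<and> otail oe' \<in> A"
      using component_boundary[of "ohead oe'" X t s "otail oe'"] edge_adj[OF oe'(1)] ends_in_V
      unfolding A_def C_def by (auto simp: otl_def split: if_splits)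
    then show "oe' \<in> supp_c E (d h)"
      using oe' component_subset[of "V - X" t] by (auto simp: supp_d_iff X_def A_def)
  qed
  ultimately show thesis using that CV by blast
qed

lemma phi_Face: "phi_c V E hde tle (Face h) = supp_c E (d h)"
proof (intro equalityI subsetI)
  fix oe assume "oe \<in> phi_c V E hde tle (Face h)"
  then obtain C where "Face h \<subseteq> Klam V E hde tle (d (chi C))" "oe \<in> supp_c E (d (chi C))"
    unfolding phi_c_def Upsilon1_def by blast
  then show "oe \<in> supp_c E (d h)" using Klam_supp by blast
next
  fix oe assume "oe \<in> supp_c E (d h)"
  then obtain C where C: "C \<subseteq> V" "kappa V E hde tle C = 1" "oe \<in> supp_c E (d (chi C))"
    "supp_c E (d (chi C)) \<subseteq> supp_c E (d h)"
    by (rule bond_in_supp)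
  then have "d (chi C) \<in> Upsilon1 V E hde tle" by (auto simp: Upsilon1_def)
  then show "oe \<in> phi_c V E hde tle (Face h)"
    using C Face_sub_Klam unfolding phi_c_def by blast
qed

end

text \<open>All claims reduce to the description F = Face h with phi^c(F) = supp(dh).\<close>
theorem mainTheorem18:
  fixes V :: "'v set" and E :: "'e::finite set" and hde tle :: "'e \<Rightarrow> 'v"
  assumes "is_graph V E hde tle"
    and "connected_graph V E hde tle"
  shows
    "(\<forall>F. F face_of VcO V E hde tle \<and> F \<noteq> {} \<longrightarrow>
          coherent_cut_orientation V E hde tle (phi_c V E hde tle F))
     \<and> inj_on (phi_c V E hde tle) {F. F face_of VcO V E hde tle \<and> F \<noteq> {}}
     \<and> (\<forall>F1 F2. F1 face_of VcO V E hde tle \<and> F1 \<noteq> {} \<and> F2 face_of VcO V E hde tle \<and> F2 \<noteq> {}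
           \<and> F1 \<subseteq> F2 \<longrightarrow> phi_c V E hde tle F2 \<subseteq> phi_c V E hde tle F1)
     \<and> (\<exists>\<nu>. bij_betw \<nu> (acyclic_orientations E hde tle) {v. v extreme_point_of VcO V E hde tle}
          \<and> (\<forall>F. F face_of VcO V E hde tle \<and> F \<noteq> {} \<longrightarrow>
                F = convex hull (\<nu> ` {D \<in> acyclic_orientations E hde tle. phi_c V E hde tle F \<subseteq> D})))"
proof -
  interpret connected_finite_graph V E hde tle
    by unfold_locales (rule assms)+
  have face: "\<exists>h. F = Face h \<and> phi_c V E hde tle F = supp_c E (d h)"
    if "F face_of VC" "F \<noteq> {}" for F
    using face_is_Face[OF that] phi_Face by blast
  have coherent: "coherent_cut_orientation V E hde tle (phi_c V E hde tle F)"
    if "F face_of VC" "F \<noteq> {}" for F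
    using face[OF that] coherent_supp by auto
  have hull: "F = convex hull (nu ` {D \<in> AO. phi_c V E hde tle F \<subseteq> D})"
    if "F face_of VC" "F \<noteq> {}" for F
    using face[OF that] Face_hull by auto
  have injective: "inj_on (phi_c V E hde tle) {F. F face_of VC \<and> F \<noteq> {}}"
  proof (rule inj_onI)
    fix F1 F2 assume "F1 \<in> {F. F face_of VC \<and> F \<noteq> {}}" "F2 \<in> {F. F face_of VC \<and> F \<noteq> {}}"
      and "phi_c V E hde tle F1 = phi_c V E hde tle F2"
    then show "F1 = F2" using hull[of F1] hull[of F2] by simp
  qed
  have antitone: "phi_c V E hde tle F2 \<subseteq> phi_c V E hde tle F1" if "F1 \<subseteq> F2" for F1 F2
    using that unfolding phi_c_def by blast
  show ?thesis
    using coherent injective antitone hull nu_bij by (intro conjI exI[of _ nu]) auto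
qed

end
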